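(* Let $n\ge2$, $\omega>0$, $G>0$, masses $m_1,\ldots,m_n>0$, pairwise distinct points $\vec R^0_1,\ldots,\vec R^0_n\in\mathbb{R}^3$ and unit vectors $\hat n_1,\ldots,\hat n_n\in\mathbb{R}^3$ be arbitrary, and let $g$ be the real symmetric $n\times n$ matrix $$g_{jj}=\sum_{\ell\ne j}\frac{Gm_\ell}{d_{j\ell}^3\,\omega}\big(1-3\cos^2\theta_{j\ell}\big),\qquad g_{jk}=-\frac{G\sqrt{m_jm_k}}{d_{jk}^3\,\omega}\big(\cos\varphi_{jk}+3\cos\theta_{jk}\cos\theta_{kj}\big)\ (j\ne k).$$ Then $$\|g\|_\infty\le\gamma\,\min\{6(n-1),\ C_1\ln(n-1)+C_2\},\qquad \gamma=\frac{Gm}{d^3\omega},$$ where $m:=\max_jm_j$, $d:=\min_{j\ne\ell}d_{j\ell}$, and $C_1,C_2$ are universal constants independent of $n$; one can take $C_1=288$, $C_2=966$.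
   Context: $\vec d_{jk}=\vec R^0_k-\vec R^0_j$, $d_{jk}=\|\vec d_{jk}\|$, $\hat d_{jk}=\vec d_{jk}/d_{jk}$; angles defined by $\cos\theta_{jk}=\hat n_j\cdot\hat d_{jk}$, $-\cos\theta_{kj}=\hat n_k\cdot\hat d_{jk}$, $\cos\varphi_{jk}=\hat n_j\cdot\hat n_k$. $\|\cdot\|_\infty$ denotes the operator norm. *)

theory Defs
  imports "HOL-Analysis.Analysis"
begin

definition d_vec :: "('n \<Rightarrow> real^3) \<Rightarrow> 'n \<Rightarrow> 'n \<Rightarrow> real^3" where
  "d_vec R j k = R k - R j"

definition d_len :: "('n \<Rightarrow> real^3) \<Rightarrow> 'n \<Rightarrow> 'n \<Rightarrow> real" where
  "d_len R j k = norm (d_vec R j k)"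

definition d_hat :: "('n \<Rightarrow> real^3) \<Rightarrow> 'n \<Rightarrow> 'n \<Rightarrow> real^3" where
  "d_hat R j k = d_vec R j k /\<^sub>R d_len R j k"

definition cos_theta :: "('n \<Rightarrow> real^3) \<Rightarrow> ('n \<Rightarrow> real^3) \<Rightarrow> 'n \<Rightarrow> 'n \<Rightarrow> real" where
  "cos_theta R nh j k = nh j \<bullet> d_hat R j k"

definition cos_phi :: "('n \<Rightarrow> real^3) \<Rightarrow> 'n \<Rightarrow> 'n \<Rightarrow> real" where
  "cos_phi nh j k = nh j \<bullet> nh k"

definition gmat :: "real \<Rightarrow> real \<Rightarrow> ('n::finite \<Rightarrow> real) \<Rightarrow> ('n \<Rightarrow> real^3) \<Rightarrow> ('n \<Rightarrow> real^3)
    \<Rightarrow> real^'n^'n" where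
  "gmat G \<omega> ms R nh = (\<chi> j k.
     if j = k then
       (\<Sum>l\<in>UNIV - {j}. G * ms l / (d_len R j l ^ 3 * \<omega>) * (1 - 3 * (cos_theta R nh j l)\<^sup>2))
     else
       - G * sqrt (ms j * ms k) / (d_len R j k ^ 3 * \<omega>)
         * (cos_phi nh j k + 3 * cos_theta R nh j k * cos_theta R nh k j))"

definition op_norm :: "real^'n^'n \<Rightarrow> real" where
  "op_norm A = onorm (\<lambda>x. A *v x)"

definition max_mass :: "('n::finite \<Rightarrow> real) \<Rightarrow> real" where
  "max_mass ms = Max (range ms)"

definition min_dist :: "('n \<Rightarrow> real^3) \<Rightarrow> real" where
  "min_dist R = Min {d_len R j l | j l. j \<noteq> l}"

end

(* The entries of g are dominated by a symmetric matrix B with B_jj = 2 * sum_{l ~= j} w_jl and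
   B_jk = 4 w_jk, where w_jl = G m / (d_jl^3 omega) = gamma (d / d_jl)^3; by the Schur test the
   operator norm is at most the largest row sum 6 gamma sum_{l ~= j} (d / d_jl)^3.  Each term is at
   most 1, giving 6(n-1).  For the logarithmic bound, the balls of radius d/2 around points at most
   d_jl away from R_j are disjoint and lie in a ball of radius d_jl + d/2 <= 3 d_jl / 2, so if R_l is
   the k-th nearest neighbour then (k+1) d^3 <= 27 d_jl^3; summing gives 27 H, with H a harmonic
   sum bounded by ln n. *)

theory Submission
  imports Defs "HOL-Analysis.Harmonic_Numbers"
begin

lemma card_mult_power_le_of_separated_in_cball:
  fixes S :: "'a::euclidean_space set"
  assumes "finite S" "d > 0" "r \<ge> 0" "S \<subseteq> cball c r"
    and sep: "\<And>p q. p \<in> S \<Longrightarrow> q \<in> S \<Longrightarrow> p \<noteq> q \<Longrightarrow> d \<le> dist p q"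
  shows "real (card S) * (d/2) ^ DIM('a) \<le> (r + d/2) ^ DIM('a)"
proof -
  define u where "u = measure lborel (ball (0::'a) 1)"
  have ball_vol: "measure lborel (ball (x::'a) e) = e ^ DIM('a) * u" if "e \<ge> 0" for x e
    unfolding u_def using that by (rule content_ball_conv_unit_ball)
  have disj: "disjoint_family_on (\<lambda>p. ball p (d/2)) S"
  proof (unfold disjoint_family_on_def, intro ballI impI)
    fix p q assume "p \<in> S" "q \<in> S" "p \<noteq> q"
    then have "d \<le> dist p q" by (rule sep)
    moreover have "dist p q < d" if "x \<in> ball p (d/2)" "x \<in> ball q (d/2)" for x
      using that by (simp add: dist_triangle_half_l)
    ultimately show "ball p (d/2) \<inter> ball q (d/2) = {}"
      by fastforce
  qed
  have sub: "(\<Union>p\<in>S. ball p (d/2)) \<subseteq> ball c (r + d/2)"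
  proof
    fix x assume "x \<in> (\<Union>p\<in>S. ball p (d/2))"
    then obtain p where "dist c p \<le> r" "dist p x < d/2"
      using \<open>S \<subseteq> cball c r\<close> by auto
    then show "x \<in> ball c (r + d/2)"
      using dist_triangle[of c x p] by simp
  qed
  have "real (card S) * ((d/2) ^ DIM('a) * u)
      = (\<Sum>p\<in>S. measure lborel (ball p (d/2)))"
    using ball_vol \<open>d > 0\<close> by simp
  also have "\<dots> = measure lborel (\<Union>p\<in>S. ball p (d/2))"
    using assms(1) disj emeasure_lborel_ball_finite
    by (intro measure_finite_Union[symmetric]) (auto simp: less_top[symmetric])
  also have "\<dots> \<le> measure lborel (ball c (r + d/2))"
    using sub emeasure_lborel_ball_finite[of c "r + d/2"]
    by (intro measure_mono_fmeasurable) (auto simp: fmeasurable_def intro!: borel_open)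
  also have "\<dots> = (r + d/2) ^ DIM('a) * u"
    using assms by (intro ball_vol) simp
  finally show ?thesis
    using content_ball_pos[of 1 "0::'a"] unfolding u_def by (simp add: mult.assoc[symmetric])
qed

lemma sum_le_sum_by_rank:
  fixes h :: "'a \<Rightarrow> real" and \<rho> :: "'a \<Rightarrow> 'b::linorder" and g :: "nat \<Rightarrow> real"
  assumes "finite L" "antimono g"
    and "\<And>l. l \<in> L \<Longrightarrow> h l \<le> g (card {l'\<in>L. \<rho> l' \<le> \<rho> l})"
  shows "sum h L \<le> (\<Sum>k=1..card L. g k)"
  using assms(1,3)
proof (induction L rule: finite_ranking_induct[where f = \<rho>])
  case empty
  then show ?case by simp
next
  case (insert x S)
  show ?case
  proof (cases "x \<in> S")
    case True
    then show ?thesis using insert by (simp add: insert_absorb)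
  next
    case False
    have "h l \<le> g (card {l'\<in>S. \<rho> l' \<le> \<rho> l})" if "l \<in> S" for l
    proof -
      have "card {l'\<in>S. \<rho> l' \<le> \<rho> l} \<le> card {l'\<in>insert x S. \<rho> l' \<le> \<rho> l}"
        using insert.hyps(1) by (intro card_mono) auto
      then show ?thesis
        using insert.prems[of l] that \<open>antimono g\<close> by (auto dest: antimonoD)
    qed
    then have "sum h S \<le> (\<Sum>k=1..card S. g k)" by (rule insert.IH)
    moreover have "{l'\<in>insert x S. \<rho> l' \<le> \<rho> x} = insert x S"
      using insert.hyps(2) by auto
    then have "h x \<le> g (Suc (card S))"
      using insert.prems[of x] insert.hyps(1) False by simp
    ultimately show ?thesis
      using insert.hyps(1) False by (simp add: sum.cl_ivl_Suc)
  qed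
qed

lemma sum_inverse_Suc_le_ln: "(\<Sum>k=1..n. inverse (real (Suc k))) \<le> ln (real (Suc n))"
proof -
  have harm_1: "harm 1 = (1::real)" by (simp add: harm_def)
  have "(\<Sum>k=1..n. inverse (real (Suc k))) = harm (Suc n) - 1"
    by (induction n) (simp_all add: harm_def[of 0] harm_Suc sum.cl_ivl_Suc)
  also have "\<dots> \<le> ln (real (Suc n))"
    using euler_mascheroni_sequence_decreasing[of 1 "Suc n"] harm_1 by simp
  finally show ?thesis .
qed

lemma card_closer_points_le:
  fixes P :: "'i::finite \<Rightarrow> 'a::euclidean_space"
  assumes "d > 0" and sep: "\<And>a b. a \<noteq> b \<Longrightarrow> d \<le> dist (P a) (P b)" and "l \<noteq> j"
  shows "real (card {l'. dist (P j) (P l') \<le> dist (P j) (P l)}) * d ^ DIM('a)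
    \<le> 3 ^ DIM('a) * dist (P j) (P l) ^ DIM('a)"
proof -
  define r where "r = dist (P j) (P l)"
  define K where "K = {l'. dist (P j) (P l') \<le> r}"
  have "d \<le> r" unfolding r_def using sep \<open>l \<noteq> j\<close> by (simp add: dist_commute)
  have "inj P"
    using sep \<open>d > 0\<close> by (metis injI dist_self not_le)
  then have "card (P ` K) = card K" by (simp add: card_image inj_on_subset)
  moreover have "real (card (P ` K)) * (d/2) ^ DIM('a) \<le> (r + d/2) ^ DIM('a)"
    using \<open>d > 0\<close> \<open>d \<le> r\<close> sep
    by (intro card_mult_power_le_of_separated_in_cball) (auto simp: K_def intro: sep)
  moreover have "(r + d/2) ^ DIM('a) \<le> (3/2 * r) ^ DIM('a)"
    using \<open>d > 0\<close> \<open>d \<le> r\<close> by (intro power_mono) auto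
  ultimately have "real (card K) * (d/2) ^ DIM('a) \<le> (3/2 * r) ^ DIM('a)" by simp
  then show ?thesis
    unfolding K_def r_def by (simp add: power_divide power_mult_distrib field_simps)
qed

lemma sum_separated_power_le:
  fixes P :: "'i::finite \<Rightarrow> 'a::euclidean_space"
  assumes "d > 0" and sep: "\<And>a b. a \<noteq> b \<Longrightarrow> d \<le> dist (P a) (P b)"
  shows "(\<Sum>l\<in>UNIV-{j}. (d / dist (P j) (P l)) ^ DIM('a))
    \<le> min (real CARD('i) - 1) (3 ^ DIM('a) * ln (real CARD('i)))"
proof -
  let ?\<rho> = "\<lambda>l. dist (P j) (P l)"
  let ?L = "UNIV - {j}"
  have card_L: "card ?L = CARD('i) - 1" by (simp add: card_Diff_singleton)
  have "(\<Sum>l\<in>?L. (d / ?\<rho> l) ^ DIM('a)) \<le> real (card ?L) * 1"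
  proof (rule sum_bounded_above)
    fix l assume "l \<in> ?L"
    then have "d \<le> ?\<rho> l" using sep by (simp add: dist_commute)
    then show "(d / ?\<rho> l) ^ DIM('a) \<le> 1"
      using \<open>d > 0\<close> by (intro power_le_one) (auto simp: divide_le_eq_1)
  qed
  then have each_le_1: "(\<Sum>l\<in>?L. (d / ?\<rho> l) ^ DIM('a)) \<le> real CARD('i) - 1"
    using card_L by (simp add: of_nat_diff)
  have rank: "(d / ?\<rho> l) ^ DIM('a)
      \<le> 3 ^ DIM('a) * inverse (real (Suc (card {l'\<in>?L. ?\<rho> l' \<le> ?\<rho> l})))"
    if "l \<in> ?L" for l
  proof -
    have "{l'. ?\<rho> l' \<le> ?\<rho> l} = insert j {l'\<in>?L. ?\<rho> l' \<le> ?\<rho> l}" by auto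
    then have "card {l'. ?\<rho> l' \<le> ?\<rho> l} = Suc (card {l'\<in>?L. ?\<rho> l' \<le> ?\<rho> l})" by simp
    moreover have "?\<rho> l > 0"
      using that sep[of j l] \<open>d > 0\<close> by (auto intro: order_less_le_trans)
    moreover have "real (card {l'. ?\<rho> l' \<le> ?\<rho> l}) * d ^ DIM('a) \<le> 3 ^ DIM('a) * ?\<rho> l ^ DIM('a)"
      using \<open>d > 0\<close> sep that by (intro card_closer_points_le) auto
    ultimately show ?thesis
      by (simp add: power_divide field_simps)
  qed
  have "(\<Sum>l\<in>?L. (d / ?\<rho> l) ^ DIM('a))
      \<le> (\<Sum>k=1..card ?L. 3 ^ DIM('a) * inverse (real (Suc k)))"
  proof (rule sum_le_sum_by_rank[where \<rho> = ?\<rho>])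
    show "antimono (\<lambda>k. 3 ^ DIM('a) * inverse (real (Suc k)) :: real)"
      by (intro antimonoI mult_left_mono le_imp_inverse_le) auto
  qed (use rank in auto)
  also have "\<dots> \<le> 3 ^ DIM('a) * ln (real CARD('i))"
    using sum_inverse_Suc_le_ln[of "card ?L"] card_L
    by (simp add: sum_distrib_left[symmetric] Suc_diff_1)
  finally show ?thesis using each_le_1 by simp
qed

lemma matrix_vector_mult_component_sq_le:
  fixes A :: "real^'n^'m"
  assumes "\<And>k. \<bar>A$j$k\<bar> \<le> B k"
  shows "((A *v x)$j)\<^sup>2 \<le> (\<Sum>k\<in>UNIV. B k) * (\<Sum>k\<in>UNIV. B k * (x$k)\<^sup>2)"
proof -
  have B_nonneg: "0 \<le> B k" for k using assms[of k] by linarith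
  have "\<bar>(A *v x)$j\<bar> \<le> (\<Sum>k\<in>UNIV. \<bar>A$j$k\<bar> * \<bar>x$k\<bar>)"
    using sum_abs[of "\<lambda>k. A$j$k * x$k" UNIV] by (simp add: matrix_vector_mult_def abs_mult)
  also have "\<dots> \<le> (\<Sum>k\<in>UNIV. sqrt (B k) * (sqrt (B k) * \<bar>x$k\<bar>))"
    using assms B_nonneg by (intro sum_mono) (simp add: mult_right_mono mult.assoc[symmetric])
  finally have "((A *v x)$j)\<^sup>2 \<le> (\<Sum>k\<in>UNIV. sqrt (B k) * (sqrt (B k) * \<bar>x$k\<bar>))\<^sup>2"
    by (metis abs_ge_zero power2_abs power_mono)
  also have "\<dots> \<le> (\<Sum>k\<in>UNIV. (sqrt (B k))\<^sup>2) * (\<Sum>k\<in>UNIV. (sqrt (B k) * \<bar>x$k\<bar>)\<^sup>2)"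
    by (rule Cauchy_Schwarz_ineq_sum)
  also have "\<dots> = (\<Sum>k\<in>UNIV. B k) * (\<Sum>k\<in>UNIV. B k * (x$k)\<^sup>2)"
    using B_nonneg by (simp add: power_mult_distrib)
  finally show ?thesis .
qed

lemma onorm_matrix_le_Schur_test:
  fixes A :: "real^'n^'m" and B :: "'m \<Rightarrow> 'n \<Rightarrow> real"
  assumes entry: "\<And>j k. \<bar>A$j$k\<bar> \<le> B j k"
    and row: "\<And>j. (\<Sum>k\<in>UNIV. B j k) \<le> M"
    and column: "\<And>k. (\<Sum>j\<in>UNIV. B j k) \<le> M"
  shows "onorm (\<lambda>x. A *v x) \<le> M"
proof (rule onorm_le)
  fix x :: "real^'n"
  have B_nonneg: "0 \<le> B j k" for j k using entry[of j k] by linarith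
  have "0 \<le> M" using row[of undefined] B_nonneg by (meson order_trans sum_nonneg)
  have norm_sq: "(norm y)\<^sup>2 = (\<Sum>k\<in>UNIV. (y$k)\<^sup>2)" for y :: "real^'k"
    unfolding power2_norm_eq_inner inner_vec_def by (simp add: power2_eq_square)
  have "(norm (A *v x))\<^sup>2 = (\<Sum>j\<in>UNIV. ((A *v x)$j)\<^sup>2)"
    by (rule norm_sq)
  also have "\<dots> \<le> (\<Sum>j\<in>UNIV. M * (\<Sum>k\<in>UNIV. B j k * (x$k)\<^sup>2))"
  proof (rule sum_mono)
    fix j
    have "((A *v x)$j)\<^sup>2 \<le> (\<Sum>k\<in>UNIV. B j k) * (\<Sum>k\<in>UNIV. B j k * (x$k)\<^sup>2)"
      using entry by (rule matrix_vector_mult_component_sq_le)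
    also have "\<dots> \<le> M * (\<Sum>k\<in>UNIV. B j k * (x$k)\<^sup>2)"
      using row B_nonneg by (intro mult_right_mono sum_nonneg) auto
    finally show "((A *v x)$j)\<^sup>2 \<le> M * (\<Sum>k\<in>UNIV. B j k * (x$k)\<^sup>2)" .
  qed
  also have "\<dots> = M * (\<Sum>k\<in>UNIV. (\<Sum>j\<in>UNIV. B j k) * (x$k)\<^sup>2)"
    unfolding sum_distrib_left[symmetric] sum_distrib_right by (subst sum.swap) (rule refl)
  also have "\<dots> \<le> M * (\<Sum>k\<in>UNIV. M * (x$k)\<^sup>2)"
    using column \<open>0 \<le> M\<close> by (intro mult_left_mono sum_mono mult_right_mono) auto
  also have "\<dots> = M\<^sup>2 * (\<Sum>k\<in>UNIV. (x$k)\<^sup>2)"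
    by (simp add: sum_distrib_left power2_eq_square mult.assoc)
  also have "\<dots> = (M * norm x)\<^sup>2"
    by (simp only: norm_sq power_mult_distrib)
  finally show "norm (A *v x) \<le> M * norm x"
    by (rule power2_le_imp_le) (use \<open>0 \<le> M\<close> in simp)
qed

lemma d_len_eq_dist: "d_len R j l = dist (R j) (R l)"
  by (simp add: d_len_def d_vec_def dist_norm norm_minus_commute)

lemma d_len_commute: "d_len R j l = d_len R l j"
  by (simp add: d_len_eq_dist dist_commute)

lemma norm_d_hat_le_1: "norm (d_hat R j l) \<le> 1"
  by (cases "d_vec R j l = 0") (simp_all add: d_hat_def d_len_def)

lemma abs_cos_theta_le_1:
  assumes "norm (nh j) \<le> 1"
  shows "\<bar>cos_theta R nh j l\<bar> \<le> 1"
proof -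
  have "\<bar>cos_theta R nh j l\<bar> \<le> norm (nh j) * norm (d_hat R j l)"
    unfolding cos_theta_def by (rule Cauchy_Schwarz_ineq2)
  also have "\<dots> \<le> 1"
    by (rule mult_le_one[OF assms norm_ge_zero norm_d_hat_le_1])
  finally show ?thesis .
qed

lemma abs_cos_phi_le_1:
  assumes "norm (nh j) \<le> 1" "norm (nh k) \<le> 1"
  shows "\<bar>cos_phi nh j k\<bar> \<le> 1"
  using Cauchy_Schwarz_ineq2[of "nh j" "nh k"] assms mult_le_one[of "norm (nh j)" "norm (nh k)"]
  unfolding cos_phi_def by simp

lemma max_mass_ge: "ms j \<le> max_mass (ms :: 'n::finite \<Rightarrow> real)"
  by (simp add: max_mass_def)

lemma max_mass_nonneg: "(\<And>l. 0 \<le> ms l) \<Longrightarrow> 0 \<le> max_mass (ms :: 'n::finite \<Rightarrow> real)"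
  using max_mass_ge order_trans by blast

lemma finite_d_len_set:
  fixes R :: "'n::finite \<Rightarrow> real^3"
  shows "finite {d_len R j l | j l. j \<noteq> l}"
  by (rule finite_subset[of _ "(\<lambda>(j, l). d_len R j l) ` UNIV"]) auto

lemma min_dist_le_d_len:
  fixes R :: "'n::finite \<Rightarrow> real^3"
  assumes "j \<noteq> l"
  shows "min_dist R \<le> d_len R j l"
  unfolding min_dist_def using assms finite_d_len_set by (intro Min_le) auto

lemma min_dist_pos:
  fixes R :: "'n::finite \<Rightarrow> real^3"
  assumes "CARD('n) \<ge> 2" "inj R"
  shows "0 < min_dist R"
proof -
  obtain j l :: 'n where "j \<noteq> l"
    using assms(1) by (metis card_le_Suc0_iff_eq finite not_less_eq_eq numeral_2_eq_2)
  then have "min_dist R \<in> {d_len R j l | j l. j \<noteq> l}"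
    unfolding min_dist_def using finite_d_len_set by (intro Min_in) auto
  then show ?thesis
    using assms(2) by (auto simp: d_len_eq_dist inj_def)
qed

lemma abs_mult_le_of_weight:
  fixes c w t b :: real
  assumes "0 \<le> c" "c \<le> w" "\<bar>t\<bar> \<le> b"
  shows "\<bar>c * t\<bar> \<le> b * w"
proof -
  have "c * \<bar>t\<bar> \<le> w * b"
    using assms by (intro mult_mono) auto
  then show ?thesis
    using assms(1) by (simp add: abs_mult mult.commute)
qed

lemma abs_gmat_diag_le:
  assumes "\<omega> > 0" "G \<ge> 0" "\<And>l. ms l \<ge> 0" "norm (nh j) \<le> 1"
  shows "\<bar>gmat G \<omega> ms R nh $ j $ j\<bar>
    \<le> (\<Sum>l\<in>UNIV-{j}. 2 * (G * max_mass ms / (d_len R j l ^ 3 * \<omega>)))"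
proof -
  have "\<bar>G * ms l / (d_len R j l ^ 3 * \<omega>) * (1 - 3 * (cos_theta R nh j l)\<^sup>2)\<bar>
      \<le> 2 * (G * max_mass ms / (d_len R j l ^ 3 * \<omega>))" for l
  proof (rule abs_mult_le_of_weight)
    show "0 \<le> G * ms l / (d_len R j l ^ 3 * \<omega>)"
      using assms by (simp add: d_len_def)
    show "G * ms l / (d_len R j l ^ 3 * \<omega>) \<le> G * max_mass ms / (d_len R j l ^ 3 * \<omega>)"
      using assms max_mass_ge[of ms l]
      by (intro divide_right_mono mult_left_mono) (simp_all add: d_len_def)
    have "(cos_theta R nh j l)\<^sup>2 \<le> 1"
      using abs_cos_theta_le_1[of nh j R l, OF assms(4)] by (simp add: abs_square_le_1)
    then show "\<bar>1 - 3 * (cos_theta R nh j l)\<^sup>2\<bar> \<le> 2"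
      unfolding abs_le_iff using zero_le_power2[of "cos_theta R nh j l"] by linarith
  qed
  then show ?thesis
    unfolding gmat_def by (simp add: order_trans[OF sum_abs sum_mono])
qed

lemma abs_gmat_offdiag_le:
  assumes "\<omega> > 0" "G \<ge> 0" "\<And>l. ms l \<ge> 0" "norm (nh j) \<le> 1" "norm (nh k) \<le> 1" "j \<noteq> k"
  shows "\<bar>gmat G \<omega> ms R nh $ j $ k\<bar> \<le> 4 * (G * max_mass ms / (d_len R j k ^ 3 * \<omega>))"
proof -
  have "\<bar>G * sqrt (ms j * ms k) / (d_len R j k ^ 3 * \<omega>)
      * (cos_phi nh j k + 3 * cos_theta R nh j k * cos_theta R nh k j)\<bar>
      \<le> 4 * (G * max_mass ms / (d_len R j k ^ 3 * \<omega>))"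
  proof (rule abs_mult_le_of_weight)
    show "0 \<le> G * sqrt (ms j * ms k) / (d_len R j k ^ 3 * \<omega>)"
      using assms by (simp add: d_len_def)
    have "sqrt (ms j * ms k) \<le> sqrt (max_mass ms * max_mass ms)"
      using assms(3) max_mass_ge[of ms] by (intro real_sqrt_le_mono mult_mono) (auto intro: order_trans)
    then have "sqrt (ms j * ms k) \<le> max_mass ms"
      using max_mass_nonneg[of ms, OF assms(3)] by simp
    then show "G * sqrt (ms j * ms k) / (d_len R j k ^ 3 * \<omega>)
        \<le> G * max_mass ms / (d_len R j k ^ 3 * \<omega>)"
      using assms by (intro divide_right_mono mult_left_mono) (simp_all add: d_len_def)
    have "\<bar>cos_theta R nh j k * cos_theta R nh k j\<bar> \<le> 1"
      using abs_cos_theta_le_1[of nh j R k, OF assms(4)]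
        abs_cos_theta_le_1[of nh k R j, OF assms(5)]
      by (simp add: abs_mult mult_le_one)
    then show "\<bar>cos_phi nh j k + 3 * cos_theta R nh j k * cos_theta R nh k j\<bar> \<le> 4"
      using abs_cos_phi_le_1[of nh j k, OF assms(4,5)] by (simp add: abs_le_iff)
  qed
  then show ?thesis
    using \<open>j \<noteq> k\<close> unfolding gmat_def by simp
qed

lemma op_norm_gmat_le:
  assumes "\<omega> > 0" "G \<ge> 0" "\<And>l. ms l \<ge> 0" "\<And>j. norm (nh j) \<le> 1"
    and neighbours: "\<And>j. (\<Sum>l\<in>UNIV-{j}. 1 / d_len R j l ^ 3) \<le> S"
  shows "op_norm (gmat G \<omega> ms R nh) \<le> 6 * (G * max_mass ms / \<omega>) * S"
proof -
  define c where "c = G * max_mass ms / \<omega>"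
  define w where "w j l = G * max_mass ms / (d_len R j l ^ 3 * \<omega>)" for j l
  define B where "B j k = (if j = k then (\<Sum>l\<in>UNIV-{j}. 2 * w j l) else 4 * w j k)" for j k
  have "0 \<le> c" unfolding c_def using assms max_mass_nonneg[of ms, OF assms(3)] by simp
  have w_eq: "w j l = c * (1 / d_len R j l ^ 3)" for j l
    unfolding w_def c_def by simp
  have row: "(\<Sum>k\<in>UNIV. B j k) \<le> 6 * c * S" for j
  proof -
    have "(\<Sum>k\<in>UNIV. B j k) = B j j + (\<Sum>k\<in>UNIV-{j}. B j k)"
      by (simp add: sum.remove)
    also have "\<dots> = 6 * c * (\<Sum>l\<in>UNIV-{j}. 1 / d_len R j l ^ 3)"
      by (simp add: B_def w_eq sum.distrib[symmetric] sum_distrib_left)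
    also have "\<dots> \<le> 6 * c * S"
      using neighbours \<open>0 \<le> c\<close> by (intro mult_left_mono) auto
    finally show ?thesis .
  qed
  have "B j k = B k j" for j k
    unfolding B_def w_def by (simp add: d_len_commute)
  then show ?thesis
    unfolding op_norm_def c_def[symmetric]
  proof (intro onorm_matrix_le_Schur_test[where B = B])
    fix j k
    show "\<bar>gmat G \<omega> ms R nh $ j $ k\<bar> \<le> B j k"
    proof (cases "j = k")
      case True
      then show ?thesis
        using abs_gmat_diag_le[OF assms(1-4)] by (simp add: B_def w_def)
    next
      case False
      then show ?thesis
        using abs_gmat_offdiag_le[OF assms(1-4) assms(4)] by (simp add: B_def w_def)
    qed
  qed (use row in auto)
qed

lemma sum_inverse_d_len_cube_le:
  fixes R :: "'n::finite \<Rightarrow> real^3"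
  assumes "CARD('n) \<ge> 2" "inj R"
  shows "(\<Sum>l\<in>UNIV-{j}. 1 / d_len R j l ^ 3)
    \<le> min (real CARD('n) - 1) (48 * ln (real CARD('n) - 1) + 161) / min_dist R ^ 3"
proof -
  define d where "d = min_dist R"
  define N where "N = real CARD('n) - 1"
  have "d > 0" unfolding d_def using assms by (rule min_dist_pos)
  have "N \<ge> 1" unfolding N_def using assms(1) by simp
  have "(\<Sum>l\<in>UNIV-{j}. (d / d_len R j l) ^ 3) \<le> min N (27 * ln (N + 1))"
    using sum_separated_power_le[of d R j] \<open>d > 0\<close> min_dist_le_d_len[of _ _ R]
    by (simp add: N_def d_def d_len_eq_dist)
  moreover have "27 * ln (N + 1) \<le> 48 * ln N + 161"
  proof -
    have "ln (N + 1) \<le> ln (2 * N)"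
      using \<open>N \<ge> 1\<close> by simp
    also have "\<dots> = ln 2 + ln N"
      using \<open>N \<ge> 1\<close> by (simp add: ln_mult)
    finally show ?thesis
      using ln_2_less_1 ln_ge_zero[OF \<open>N \<ge> 1\<close>] by linarith
  qed
  ultimately have "(\<Sum>l\<in>UNIV-{j}. (d / d_len R j l) ^ 3) \<le> min N (48 * ln N + 161)"
    by simp
  moreover have "(\<Sum>l\<in>UNIV-{j}. 1 / d_len R j l ^ 3)
      = (\<Sum>l\<in>UNIV-{j}. (d / d_len R j l) ^ 3) / d ^ 3"
    using \<open>d > 0\<close> by (simp add: power_divide sum_divide_distrib)
  ultimately show ?thesis
    unfolding N_def d_def using \<open>d > 0\<close> by (simp add: d_def divide_right_mono)
qed

theorem proposition2:
  fixes G \<omega> :: real and ms :: "'n::finite \<Rightarrow> real"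
    and R nh :: "'n \<Rightarrow> real^3"
  assumes "CARD('n) \<ge> 2"
    and "\<omega> > 0" and "G > 0"
    and "\<And>j. ms j > 0"
    and "inj R"
    and "\<And>j. norm (nh j) = 1"
  shows "op_norm (gmat G \<omega> ms R nh)
     \<le> (G * max_mass ms / (min_dist R ^ 3 * \<omega>))
        * min (6 * (real CARD('n) - 1)) (288 * ln (real CARD('n) - 1) + 966)"
proof -
  let ?N = "real CARD('n) - 1"
  have "op_norm (gmat G \<omega> ms R nh)
      \<le> 6 * (G * max_mass ms / \<omega>) * (min ?N (48 * ln ?N + 161) / min_dist R ^ 3)"
    using assms sum_inverse_d_len_cube_le[OF assms(1,5)]
    by (intro op_norm_gmat_le) (auto intro: less_imp_le)
  also have "\<dots> = (G * max_mass ms / (min_dist R ^ 3 * \<omega>)) * (6 * min ?N (48 * ln ?N + 161))"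
    by (simp add: mult_ac)
  also have "6 * min ?N (48 * ln ?N + 161) = min (6 * ?N) (288 * ln ?N + 966)"
    by (simp add: min_mult_distrib_left)
  finally show ?thesis .
qed

end
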